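(* For every $r\ge3$ there is a bijection between the set of partitions of the highest root $\tilde\alpha_{C_r}=2\varepsilon_1$ of type $C_r$ into positive roots of $C_r$ and the set $\mathrm{JS}(\langle2\rangle,\langle2\rangle,r)$. In particular $K_{C_r}(\tilde\alpha_{C_r})=\mathsf{js}(\langle2\rangle,\langle2\rangle,r)$.
   Context: The positive roots of type $C_r$ are $\Phi^+_{C_r}=\{\varepsilon_i-\varepsilon_j,\ \varepsilon_i+\varepsilon_j:1\le i<j\le r\}\cup\{2\varepsilon_i:1\le i\le r\}\subset\mathbb{R}^r$; a partition of $\mu$ is a finite multiset of positive roots summing to $\mu$, and $K_{C_r}(\mu)$ is their number. A juggling state is a finitely supported integer vector $\langle s_1,s_2,\dots\rangle$ indexed by heights (trailing zeros omitted). A juggling sequence of length $n$ from $\mathbf{a}$ to $\mathbf{b}$ is a sequence $(\mathbf{s}_0,\dots,\mathbf{s}_n)$ with $\mathbf{s}_0=\mathbf{a}$, $\mathbf{s}_n=\mathbf{b}$ such that for each $i$ there are nonnegative integers $c^{(i)}_k$ (finitely many nonzero) with $\sum_k c^{(i)}_k=(\mathbf{s}_{i-1})_1$ and $(\mathbf{s}_i)_k=(\mathbf{s}_{i-1})_{k+1}+c^{(i)}_k$ for all $k\ge1$. $\mathrm{JS}(\mathbf{a},\mathbf{b},n)$ is the set of these and $\mathsf{js}$ its cardinality. *)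

theory Defs
  imports Main "HOL-Library.Multiset"
begin

text \<open>Vectors of R^r (with integer coordinates) are represented as functions
  nat \<Rightarrow> int, coordinates 1..r, zero elsewhere.\<close>

definition unitv :: "nat \<Rightarrow> nat \<Rightarrow> int" where
  "unitv i = (\<lambda>k. if k = i then 1 else 0)"

definition pos_roots_C :: "nat \<Rightarrow> (nat \<Rightarrow> int) set" where
  "pos_roots_C r =
     {(\<lambda>k. unitv i k - unitv j k) | i j. 1 \<le> i \<and> i < j \<and> j \<le> r}
   \<union> {(\<lambda>k. unitv i k + unitv j k) | i j. 1 \<le> i \<and> i < j \<and> j \<le> r}
   \<union> {(\<lambda>k. 2 * unitv i k) | i. 1 \<le> i \<and> i \<le> r}"

definition highest_root_C :: "nat \<Rightarrow> int" where
  "highest_root_C = (\<lambda>k. 2 * unitv 1 k)"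

definition partitions_C :: "nat \<Rightarrow> (nat \<Rightarrow> int) \<Rightarrow> (nat \<Rightarrow> int) multiset set" where
  "partitions_C r mu =
     {M. set_mset M \<subseteq> pos_roots_C r \<and> (\<forall>k. sum_mset (image_mset (\<lambda>v. v k) M) = mu k)}"

definition kostant_C :: "nat \<Rightarrow> (nat \<Rightarrow> int) \<Rightarrow> nat" where
  "kostant_C r mu = card (partitions_C r mu)"

text \<open>Juggling states: functions nat \<Rightarrow> int indexed by heights k \<ge> 1;
  the (meaningless) entry at index 0 is normalised to 0.\<close>
definition js_step :: "(nat \<Rightarrow> int) \<Rightarrow> (nat \<Rightarrow> int) \<Rightarrow> bool" where
  "js_step s t = (\<exists>c :: nat \<Rightarrow> nat. c 0 = 0 \<and> finite {k. c k \<noteq> 0} \<and>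
      (\<Sum>k\<in>{k. c k \<noteq> 0}. int (c k)) = s 1 \<and>
      (\<forall>k\<ge>1. t k = s (k + 1) + int (c k)))"

definition JS :: "(nat \<Rightarrow> int) \<Rightarrow> (nat \<Rightarrow> int) \<Rightarrow> nat \<Rightarrow> (nat \<Rightarrow> int) list set" where
  "JS a b n = {ss. length ss = n + 1 \<and> ss ! 0 = a \<and> ss ! n = b \<and>
      (\<forall>s\<in>set ss. s 0 = 0) \<and>
      (\<forall>i\<in>{1..n}. js_step (ss ! (i - 1)) (ss ! i))}"

definition js :: "(nat \<Rightarrow> int) \<Rightarrow> (nat \<Rightarrow> int) \<Rightarrow> nat \<Rightarrow> nat" where
  "js a b n = card (JS a b n)"

definition state2 :: "nat \<Rightarrow> int" where
  "state2 = (\<lambda>k. if k = 1 then 2 else 0)"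

end

theory Submission
  imports Defs
begin

text \<open>
  The coordinate sum of a positive root of \<open>C\<^sub>r\<close> is \<open>0\<close> for \<open>\<epsilon>\<^sub>i - \<epsilon>\<^sub>j\<close> and \<open>2\<close> for
  \<open>\<epsilon>\<^sub>i + \<epsilon>\<^sub>j\<close> and \<open>2\<epsilon>\<^sub>i\<close>, so a partition of \<open>2\<epsilon>\<^sub>1\<close> contains exactly one root
  \<open>\<epsilon>\<^sub>i + \<epsilon>\<^sub>j\<close> (\<open>i \<le> j\<close>). Splitting it into \<open>\<epsilon>\<^sub>i - \<epsilon>\<^bsub>r+1\<^esub>\<close> and \<open>\<epsilon>\<^sub>j - \<epsilon>\<^bsub>r+1\<^esub>\<close>
  identifies these partitions with multisets of arcs \<open>i \<rightarrow> j\<close> (\<open>1 \<le> i < j \<le> r + 1\<close>) that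
  form a flow of value 2 from node \<open>1\<close> to node \<open>r + 1\<close>.

  A flow is in turn a juggling sequence: after node \<open>i\<close> the state has at height \<open>k\<close> as many
  balls as there are arcs crossing the cut between \<open>i\<close> and \<open>i + 1\<close> and landing at \<open>i + k\<close>,
  the two units of flow counting as balls landing at node \<open>1\<close>. Passing node \<open>i\<close> rethrows the
  balls landing there along the arcs leaving \<open>i\<close>; flow conservation at \<open>i\<close> is exactly the
  condition that all of them are rethrown, and the arcs are recovered from the differences of
  consecutive states.
\<close>

lemma count_image_mset_eq_size: "count (image_mset f M) x = size {#y \<in># M. f y = x#}"
  by (induction M) auto

lemma size_2_doubleton_mset:
  assumes "size M = 2"
  shows "\<exists>a b. M = {#a, b#}"
proof -
  obtain a N where M: "M = add_mset a N"
    using size_eq_Suc_imp_eq_union[of M 1] assms by auto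
  then have "size N = 1" using assms by simp
  then obtain b where "N = {#b#}" using size_1_singleton_mset by blast
  then show ?thesis using M by blast
qed

lemma image_mset_inj_on_eqD:
  assumes f: "inj_on f A" and "set_mset M \<subseteq> A" "set_mset M' \<subseteq> A"
    and eq: "image_mset f M = image_mset f M'"
  shows "M = M'"
proof -
  have "image_mset (inv_into A f) (image_mset f X) = X" if "set_mset X \<subseteq> A" for X
  proof -
    have "image_mset (inv_into A f) (image_mset f X) = image_mset id X"
      unfolding image_mset.compositionality using that inv_into_f_f[OF f]
      by (intro image_mset_cong) auto
    then show ?thesis by simp
  qed
  then show ?thesis using assms by metis
qed

lemma ex_image_mset_eq:
  assumes "set_mset M \<subseteq> f ` A"
  shows "\<exists>N. set_mset N \<subseteq> A \<and> image_mset f N = M"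
  using assms
proof (induction M)
  case (add x M)
  then obtain N where "set_mset N \<subseteq> A" "image_mset f N = M" by auto
  moreover obtain a where "a \<in> A" "x = f a" using add.prems by auto
  ultimately show ?case by (intro exI[of _ "add_mset a N"]) simp
qed simp

lemma js_step_iff:
  assumes "\<forall>k>m. t k = s (k + 1)"
  shows "js_step s t \<longleftrightarrow> (\<forall>k\<ge>1. s (k + 1) \<le> t k) \<and> (\<Sum>k=1..m. t k - s (k + 1)) = s 1"
proof
  assume "js_step s t"
  then obtain c :: "nat \<Rightarrow> nat" where c: "c 0 = 0" "(\<Sum>k\<in>{k. c k \<noteq> 0}. int (c k)) = s 1"
    and t: "\<forall>k\<ge>1. t k = s (k + 1) + int (c k)"
    unfolding js_step_def by blast
  have supp: "{k. c k \<noteq> 0} \<subseteq> {1..m}"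
  proof
    fix k assume "k \<in> {k. c k \<noteq> 0}"
    then have "c k \<noteq> 0" by simp
    moreover have "k \<noteq> 0" using c(1) calculation by metis
    moreover have "\<not> m < k" using assms t calculation by force
    ultimately show "k \<in> {1..m}" by simp
  qed
  have "(\<Sum>k=1..m. t k - s (k + 1)) = (\<Sum>k=1..m. int (c k))"
    using t by (intro sum.cong) auto
  also have "\<dots> = s 1"
    using supp c(2) by (subst sum.mono_neutral_right) auto
  finally show "(\<forall>k\<ge>1. s (k + 1) \<le> t k) \<and> (\<Sum>k=1..m. t k - s (k + 1)) = s 1"
    using t by simp
next
  assume R: "(\<forall>k\<ge>1. s (k + 1) \<le> t k) \<and> (\<Sum>k=1..m. t k - s (k + 1)) = s 1"
  define c where "c k = (if k = 0 then 0 else nat (t k - s (k + 1)))" for k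
  have supp: "{k. c k \<noteq> 0} \<subseteq> {1..m}"
    using assms by (auto simp: c_def) (metis leI less_irrefl)
  then have fin: "finite {k. c k \<noteq> 0}"
    using finite_subset by blast
  have "(\<Sum>k\<in>{k. c k \<noteq> 0}. int (c k)) = (\<Sum>k=1..m. int (c k))"
    using supp by (intro sum.mono_neutral_left) auto
  also have "\<dots> = s 1"
    using R by (auto simp: c_def intro!: sum.cong)
  finally show "js_step s t"
    unfolding js_step_def using R fin by (intro exI[of _ c]) (auto simp: c_def)
qed

lemma js_step_le: "js_step s t \<Longrightarrow> 1 \<le> k \<Longrightarrow> s (k + 1) \<le> t k"
  unfolding js_step_def by force

lemma JS_step_le:
  assumes "ss \<in> JS a b n" "i \<in> {1..n}" "1 \<le> k"
  shows "(ss ! (i - 1)) (k + 1) \<le> (ss ! i) k"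
  using assms by (intro js_step_le) (auto simp: JS_def)

lemma JS_descent:
  assumes "ss \<in> JS a b n" "j \<le> n" "d \<le> j" "1 \<le> k"
  shows "(ss ! (j - d)) (k + d) \<le> (ss ! j) k"
  using assms(3)
proof (induction d)
  case 0
  then show ?case by simp
next
  case (Suc d)
  have "(ss ! (j - d - 1)) (k + d + 1) \<le> (ss ! (j - d)) (k + d)"
    using Suc.prems assms by (intro JS_step_le[OF assms(1)]) auto
  then show ?case using Suc by simp
qed

section \<open>Flows of value two\<close>

definition arc_root :: "nat \<times> nat \<Rightarrow> nat \<Rightarrow> int" where
  "arc_root p = (\<lambda>k. unitv (fst p) k - unitv (snd p) k)"

definition arcs :: "nat \<Rightarrow> (nat \<times> nat) set" where
  "arcs r = {(i, j). 1 \<le> i \<and> i < j \<and> j \<le> r + 1}"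

definition flows :: "nat \<Rightarrow> (nat \<times> nat) multiset set" where
  "flows r = {N. set_mset N \<subseteq> arcs r \<and>
     (\<forall>k. (\<Sum>p\<in>#N. arc_root p k) = 2 * unitv 1 k - 2 * unitv (r + 1) k)}"

definition out_deg :: "(nat \<times> nat) multiset \<Rightarrow> nat \<Rightarrow> nat" where
  "out_deg N k = count (image_mset fst N) k"

definition in_deg :: "(nat \<times> nat) multiset \<Rightarrow> nat \<Rightarrow> nat" where
  "in_deg N k = count (image_mset snd N) k"

lemma sum_arc_root: "(\<Sum>p\<in>#N. arc_root p k) = int (out_deg N k) - int (in_deg N k)"
  by (induction N) (auto simp: arc_root_def unitv_def out_deg_def in_deg_def)

lemma finite_arcs: "finite (arcs r)"
  by (rule finite_subset[of _ "{..r+1} \<times> {..r+1}"]) (auto simp: arcs_def)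

lemma out_deg_eq_sum:
  assumes "set_mset N \<subseteq> arcs r"
  shows "out_deg N i = (\<Sum>k=1..r+1. count N (i, i + k))"
proof -
  have "fst -` {i} \<inter> set_mset N \<subseteq> (\<lambda>k. (i, i + k)) ` {1..r+1}"
  proof
    fix p assume "p \<in> fst -` {i} \<inter> set_mset N"
    then have "fst p = i" "p \<in> arcs r" using assms by auto
    then show "p \<in> (\<lambda>k. (i, i + k)) ` {1..r+1}"
      by (intro image_eqI[of _ _ "snd p - i"]) (auto simp: arcs_def)
  qed
  then have "out_deg N i = sum (count N) ((\<lambda>k. (i, i + k)) ` {1..r+1})"
    unfolding out_deg_def count_image_mset by (intro sum.mono_neutral_left) auto
  also have "\<dots> = (\<Sum>k=1..r+1. count N (i, i + k))"
    by (subst sum.reindex) (auto simp: inj_on_def)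
  finally show ?thesis .
qed

lemma out_deg_eq_0:
  assumes "set_mset N \<subseteq> arcs r" "k = 0 \<or> r < k"
  shows "out_deg N k = 0"
proof -
  have "k \<notin># image_mset fst N" using assms by (auto simp: arcs_def)
  then show ?thesis by (simp add: out_deg_def count_eq_zero_iff)
qed

lemma in_deg_eq_0:
  assumes "set_mset N \<subseteq> arcs r" "k = 0 \<or> r + 1 < k"
  shows "in_deg N k = 0"
proof -
  have "k \<notin># image_mset snd N" using assms by (auto simp: arcs_def)
  then show ?thesis by (simp add: in_deg_def count_eq_zero_iff)
qed

definition cut_state :: "(nat \<times> nat) multiset \<Rightarrow> nat \<Rightarrow> nat \<Rightarrow> int" where
  "cut_state N i k = (if k = 0 then 0 else
     int (size {#p \<in># N. fst p \<le> i \<and> snd p = i + k#}) + (if i + k = 1 then 2 else 0))"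

lemma cut_state_Suc:
  assumes "1 \<le> k"
  shows "cut_state N (Suc i) k = cut_state N i (k + 1) + int (count N (Suc i, Suc i + k))"
proof -
  have "size {#p \<in># N. fst p \<le> Suc i \<and> snd p = Suc i + k#}
      = size {#p \<in># N. fst p \<le> i \<and> snd p = i + (k + 1)#} + count N (Suc i, Suc i + k)"
    by (induction N) auto
  then show ?thesis using assms by (simp add: cut_state_def)
qed

lemma cut_state_0:
  assumes "set_mset N \<subseteq> arcs r"
  shows "cut_state N 0 = state2"
proof
  fix k
  have no_arcs: "{#p \<in># N. fst p \<le> 0 \<and> snd p = 0 + k#} = {#}"
    using assms by (force simp: arcs_def)
  show "cut_state N 0 k = state2 k"
    unfolding cut_state_def state2_def by (simp only: no_arcs) simp
qed

lemma cut_state_at_1: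
  assumes "set_mset N \<subseteq> arcs r" "1 \<le> i"
  shows "cut_state N (i - 1) 1 = int (in_deg N i) + (if i = 1 then 2 else 0)"
proof -
  have "{#p \<in># N. fst p \<le> i - 1 \<and> snd p = i#} = {#p \<in># N. snd p = i#}"
    using assms by (intro filter_mset_cong0) (force simp: arcs_def)
  then show ?thesis using assms(2) by (simp add: cut_state_def in_deg_def count_image_mset_eq_size)
qed

lemma js_step_cut_state_iff:
  assumes "set_mset N \<subseteq> arcs r" "1 \<le> i"
  shows "js_step (cut_state N (i - 1)) (cut_state N i) \<longleftrightarrow> int (out_deg N i) = cut_state N (i - 1) 1"
proof -
  obtain j where i: "i = Suc j" using assms(2) by (cases i) auto
  have jump: "cut_state N i k - cut_state N (i - 1) (k + 1) = int (count N (i, i + k))"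
    if "1 \<le> k" for k
    using cut_state_Suc[OF that] by (simp add: i)
  have "\<forall>k>r+1. cut_state N i k = cut_state N (i - 1) (k + 1)"
  proof (intro allI impI)
    fix k assume k: "r + 1 < k"
    then have "count N (i, i + k) = 0" using assms by (auto simp: count_eq_zero_iff arcs_def)
    then show "cut_state N i k = cut_state N (i - 1) (k + 1)" using jump[of k] k by simp
  qed
  note step = js_step_iff[OF this]
  have "\<forall>k\<ge>1. cut_state N (i - 1) (k + 1) \<le> cut_state N i k"
  proof (intro allI impI)
    fix k :: nat assume "1 \<le> k"
    from jump[OF this] show "cut_state N (i - 1) (k + 1) \<le> cut_state N i k" by linarith
  qed
  moreover have "(\<Sum>k=1..r+1. cut_state N i k - cut_state N (i - 1) (k + 1)) = int (out_deg N i)"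
    using jump by (simp add: out_deg_eq_sum[OF assms(1)])
  ultimately show ?thesis unfolding step by simp
qed

lemma flows_iff_cut_state:
  assumes N: "set_mset N \<subseteq> arcs r" and r: "1 \<le> r"
  shows "N \<in> flows r \<longleftrightarrow>
    (\<forall>i\<in>{1..r}. int (out_deg N i) = cut_state N (i - 1) 1) \<and> in_deg N (r + 1) = 2"
    (is "_ \<longleftrightarrow> ?inner \<and> ?sink")
proof -
  define net where "net k = int (out_deg N k) - int (in_deg N k)" for k
  have "N \<in> flows r \<longleftrightarrow> (\<forall>k. net k = 2 * unitv 1 k - 2 * unitv (r + 1) k)"
    using N by (simp add: flows_def sum_arc_root net_def)
  also have "\<dots> \<longleftrightarrow> ?inner \<and> ?sink"
  proof
    assume net: "\<forall>k. net k = 2 * unitv 1 k - 2 * unitv (r + 1) k"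
    have "int (out_deg N i) = cut_state N (i - 1) 1" if "i \<in> {1..r}" for i
      using net[rule_format, of i] that cut_state_at_1[OF N, of i] by (auto simp: net_def unitv_def)
    moreover have "in_deg N (r + 1) = 2"
      using net[rule_format, of "r + 1"] r out_deg_eq_0[OF N, of "r + 1"] by (simp add: net_def unitv_def)
    ultimately show "?inner \<and> ?sink" by blast
  next
    assume R: "?inner \<and> ?sink"
    show "\<forall>k. net k = 2 * unitv 1 k - 2 * unitv (r + 1) k"
    proof
      fix k
      consider "k = 0 \<or> r + 1 < k" | "k \<in> {1..r}" | "k = r + 1" by fastforce
      then show "net k = 2 * unitv 1 k - 2 * unitv (r + 1) k"
      proof cases
        case 1
        then show ?thesis
          using out_deg_eq_0[OF N, of k] in_deg_eq_0[OF N, of k] by (auto simp: net_def unitv_def)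
      next
        case 2
        then show ?thesis using R cut_state_at_1[OF N, of k] by (auto simp: net_def unitv_def)
      next
        case 3
        then show ?thesis using R r out_deg_eq_0[OF N, of k] by (simp add: net_def unitv_def)
      qed
    qed
  qed
  finally show ?thesis .
qed

lemma sink_arcs:
  assumes N: "N \<in> flows r" and r: "1 \<le> r"
  obtains x y where "{#p \<in># N. snd p = r + 1#} = {#(x, r + 1), (y, r + 1)#}"
    and "x \<in> {1..r}" and "y \<in> {1..r}"
proof -
  have arcs: "set_mset N \<subseteq> arcs r" using N by (simp add: flows_def)
  have "size {#p \<in># N. snd p = r + 1#} = 2"
    using N flows_iff_cut_state[OF arcs r] by (simp add: in_deg_def count_image_mset_eq_size)
  then obtain p q where pq: "{#p \<in># N. snd p = r + 1#} = {#p, q#}"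
    using size_2_doubleton_mset by blast
  have sink_arc: "s = (fst s, r + 1) \<and> fst s \<in> {1..r}" if "s \<in># {#p \<in># N. snd p = r + 1#}" for s
    using that arcs by (cases s) (auto simp: arcs_def)
  show thesis
  proof (rule that)
    show "{#p \<in># N. snd p = r + 1#} = {#(fst p, r + 1), (fst q, r + 1)#}"
      using sink_arc[of p] sink_arc[of q] unfolding pq by simp
    show "fst p \<in> {1..r}" "fst q \<in> {1..r}"
      using sink_arc[of p] sink_arc[of q] unfolding pq by simp_all
  qed
qed

section \<open>Flows as juggling sequences\<close>

definition flow_js :: "nat \<Rightarrow> (nat \<times> nat) multiset \<Rightarrow> (nat \<Rightarrow> int) list" where
  "flow_js r N = map (cut_state N) [0..<r+1]"

lemma nth_flow_js: "i \<le> r \<Longrightarrow> flow_js r N ! i = cut_state N i"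
  by (simp add: flow_js_def nth_map_upt del: upt_Suc)

lemma cut_state_last:
  assumes N: "N \<in> flows r" and r: "1 \<le> r"
  shows "cut_state N r = state2"
proof
  fix k :: nat
  have arcs: "set_mset N \<subseteq> arcs r" using N by (simp add: flows_def)
  consider "k = 0" | "k = 1" | "2 \<le> k" by linarith
  then show "cut_state N r k = state2 k"
  proof cases
    case 1
    then show ?thesis by (simp add: cut_state_def state2_def)
  next
    case 2
    then show ?thesis
      using cut_state_at_1[OF arcs, of "r + 1"] N arcs r
      by (simp add: flows_iff_cut_state state2_def)
  next
    case 3
    have "{#p \<in># N. fst p \<le> r \<and> snd p = r + k#} = {#}"
      using arcs 3 by (force simp: arcs_def)
    then show ?thesis using 3 by (simp add: cut_state_def state2_def)
  qed
qed

lemma flow_js_in_JS: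
  assumes N: "N \<in> flows r" and r: "1 \<le> r"
  shows "flow_js r N \<in> JS state2 state2 r"
proof -
  have arcs: "set_mset N \<subseteq> arcs r" using N by (simp add: flows_def)
  show ?thesis
    unfolding JS_def
  proof (intro CollectI conjI ballI)
    show "length (flow_js r N) = r + 1" by (simp add: flow_js_def)
    show "flow_js r N ! 0 = state2" using cut_state_0[OF arcs] by (simp add: nth_flow_js)
    show "flow_js r N ! r = state2" using cut_state_last[OF N r] by (simp add: nth_flow_js)
    show "s 0 = 0" if "s \<in> set (flow_js r N)" for s
      using that by (auto simp: flow_js_def cut_state_def)
    show "js_step (flow_js r N ! (i - 1)) (flow_js r N ! i)" if "i \<in> {1..r}" for i
      using that N js_step_cut_state_iff[OF arcs] flows_iff_cut_state[OF arcs r]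
        nth_flow_js[of i r N] nth_flow_js[of "i - 1" r N]
      by auto
  qed
qed

lemma inj_on_flow_js: "inj_on (flow_js r) {N. set_mset N \<subseteq> arcs r}"
proof (rule inj_onI)
  fix N N' assume N: "N \<in> {N. set_mset N \<subseteq> arcs r}" and N': "N' \<in> {N. set_mset N \<subseteq> arcs r}"
    and eq: "flow_js r N = flow_js r N'"
  have cut: "cut_state N i = cut_state N' i" if "i \<le> r" for i
    using eq nth_flow_js[OF that] by metis
  show "N = N'"
  proof (rule multiset_eqI)
    fix p :: "nat \<times> nat"
    show "count N p = count N' p"
    proof (cases "p \<in> arcs r")
      case True
      then obtain a b where ab: "p = (a, b)" "1 \<le> a" "a < b" "b \<le> r + 1"
        by (auto simp: arcs_def)
      define i k where "i = a - 1" and "k = b - a"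
      then have p: "p = (Suc i, Suc i + k)" "1 \<le> k" "Suc i \<le> r" using ab by auto
      then show ?thesis
        using cut_state_Suc[OF p(2), of N i] cut_state_Suc[OF p(2), of N' i] cut[of i] cut[of "Suc i"]
        by simp
    next
      case False
      then show ?thesis using N N' by (metis count_eq_zero_iff mem_Collect_eq subsetD)
    qed
  qed
qed

definition js_flow :: "nat \<Rightarrow> (nat \<Rightarrow> int) list \<Rightarrow> (nat \<times> nat) multiset" where
  "js_flow r ss = Abs_multiset (\<lambda>(i, j).
     if (i, j) \<in> arcs r then nat ((ss ! i) (j - i) - (ss ! (i - 1)) (j - i + 1)) else 0)"

lemma count_js_flow:
  "count (js_flow r ss) = (\<lambda>(i, j).
     if (i, j) \<in> arcs r then nat ((ss ! i) (j - i) - (ss ! (i - 1)) (j - i + 1)) else 0)"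
  unfolding js_flow_def
  by (rule count_Abs_multiset, rule finite_subset[OF _ finite_arcs]) (auto split: if_splits)

lemma set_js_flow: "set_mset (js_flow r ss) \<subseteq> arcs r"
proof
  fix p assume "p \<in># js_flow r ss"
  then have "count (js_flow r ss) p \<noteq> 0" by simp
  then show "p \<in> arcs r" by (cases p) (auto simp: count_js_flow split: if_splits)
qed

lemma count_js_flow_arc:
  assumes ss: "ss \<in> JS state2 state2 r" and i: "i \<in> {1..r}" and k: "1 \<le> k"
  shows "int (count (js_flow r ss) (i, i + k)) = (ss ! i) k - (ss ! (i - 1)) (k + 1)"
proof (cases "i + k \<le> r + 1")
  case True
  then show ?thesis
    using JS_step_le[OF ss i k] i k by (simp add: count_js_flow arcs_def)
next
  case False
  have ends: "ss ! 0 = state2" "ss ! r = state2" using ss by (auto simp: JS_def)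
  have "(ss ! (r - (r - i))) (k - (r - i) + (r - i)) \<le> (ss ! r) (k - (r - i))"
    using False i by (intro JS_descent[OF ss]) auto
  moreover have "2 \<le> k - (r - i)" using False i by auto
  ultimately have upper: "(ss ! i) k \<le> 0"
    using i ends by (auto simp: state2_def)
  have "(ss ! (i - 1 - (i - 1))) (k + 1 + (i - 1)) \<le> (ss ! (i - 1)) (k + 1)"
    using i by (intro JS_descent[OF ss]) auto
  then have lower: "0 \<le> (ss ! (i - 1)) (k + 1)"
    using i k ends by (auto simp: state2_def)
  show ?thesis
    using False upper lower JS_step_le[OF ss i k] by (simp add: count_js_flow arcs_def)
qed

lemma cut_state_js_flow:
  assumes ss: "ss \<in> JS state2 state2 r" and i: "i \<le> r"
  shows "cut_state (js_flow r ss) i = ss ! i"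
  using i
proof (induction i)
  case 0
  then show ?case using cut_state_0[OF set_js_flow] ss by (simp add: JS_def)
next
  case (Suc i)
  show ?case
  proof
    fix k :: nat
    show "cut_state (js_flow r ss) (Suc i) k = (ss ! Suc i) k"
    proof (cases "k = 0")
      case True
      have "ss ! Suc i \<in> set ss" using ss Suc.prems by (simp add: JS_def)
      then show ?thesis using True ss by (auto simp: JS_def cut_state_def)
    next
      case False
      then show ?thesis
        using cut_state_Suc[of k "js_flow r ss" i] count_js_flow_arc[OF ss, of "Suc i" k] Suc
        by simp
    qed
  qed
qed

lemma js_flow_in_flows:
  assumes ss: "ss \<in> JS state2 state2 r" and r: "1 \<le> r"
  shows "js_flow r ss \<in> flows r"
  unfolding flows_iff_cut_state[OF set_js_flow r]
proof
  show "\<forall>i\<in>{1..r}. int (out_deg (js_flow r ss) i) = cut_state (js_flow r ss) (i - 1) 1"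
  proof
    fix i assume i: "i \<in> {1..r}"
    then have "js_step (ss ! (i - 1)) (ss ! i)" using ss by (simp add: JS_def)
    moreover have "cut_state (js_flow r ss) (i - 1) = ss ! (i - 1)" "cut_state (js_flow r ss) i = ss ! i"
      using i by (auto intro: cut_state_js_flow[OF ss])
    ultimately show "int (out_deg (js_flow r ss) i) = cut_state (js_flow r ss) (i - 1) 1"
      using js_step_cut_state_iff[OF set_js_flow, of i r ss] i by simp
  qed
  have "cut_state (js_flow r ss) r 1 = 2"
    using cut_state_js_flow[OF ss] ss by (simp add: JS_def state2_def)
  then show "in_deg (js_flow r ss) (r + 1) = 2"
    using cut_state_at_1[OF set_js_flow, of "r + 1"] r by simp
qed

lemma flow_js_js_flow:
  assumes ss: "ss \<in> JS state2 state2 r"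
  shows "flow_js r (js_flow r ss) = ss"
proof (rule nth_equalityI)
  show "length (flow_js r (js_flow r ss)) = length ss" using ss by (simp add: flow_js_def JS_def)
  show "flow_js r (js_flow r ss) ! i = ss ! i" if "i < length (flow_js r (js_flow r ss))" for i
  proof -
    have "i \<le> r" using that by (simp add: flow_js_def)
    then show ?thesis by (simp add: nth_flow_js cut_state_js_flow[OF ss])
  qed
qed

lemma bij_betw_flow_js:
  assumes "1 \<le> r"
  shows "bij_betw (flow_js r) (flows r) (JS state2 state2 r)"
proof (rule bij_betw_imageI)
  show "inj_on (flow_js r) (flows r)"
    by (rule inj_on_subset[OF inj_on_flow_js]) (auto simp: flows_def)
  show "flow_js r ` flows r = JS state2 state2 r"
    using flow_js_in_JS js_flow_in_flows flow_js_js_flow assms by (force simp: image_iff)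
qed

section \<open>Flows as partitions of the highest root\<close>

definition sink_root :: "nat \<Rightarrow> (nat \<times> nat) multiset \<Rightarrow> nat \<Rightarrow> int" where
  "sink_root r N = (\<lambda>k. int (count (image_mset fst {#p \<in># N. snd p = r + 1#}) k))"

definition flow_partition :: "nat \<Rightarrow> (nat \<times> nat) multiset \<Rightarrow> (nat \<Rightarrow> int) multiset" where
  "flow_partition r N = image_mset arc_root {#p \<in># N. snd p \<noteq> r + 1#} + {#sink_root r N#}"

lemma sink_root_eq:
  assumes "{#p \<in># N. snd p = r + 1#} = {#(x, r + 1), (y, r + 1)#}"
  shows "sink_root r N = (\<lambda>k. unitv x k + unitv y k)"
  using assms by (auto simp: sink_root_def unitv_def)

lemma unitv_add_in_pos_roots_C:
  assumes "i \<in> {1..r}" "j \<in> {1..r}"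
  shows "(\<lambda>k. unitv i k + unitv j k) \<in> pos_roots_C r"
proof -
  consider "i < j" | "j < i" | "i = j" by linarith
  then show ?thesis
  proof cases
    case 1
    then show ?thesis using assms unfolding pos_roots_C_def atLeastAtMost_iff by blast
  next
    case 2
    then have "(\<lambda>k. unitv i k + unitv j k) = (\<lambda>k. unitv j k + unitv i k)" by (simp add: add.commute)
    then show ?thesis using assms 2 unfolding pos_roots_C_def atLeastAtMost_iff by blast
  next
    case 3
    then have "(\<lambda>k. unitv i k + unitv j k) = (\<lambda>k. 2 * unitv i k)" by (simp add: fun_eq_iff)
    then show ?thesis using assms unfolding pos_roots_C_def atLeastAtMost_iff by blast
  qed
qed

lemma arc_root_in_pos_roots_C: "1 \<le> i \<Longrightarrow> i < j \<Longrightarrow> j \<le> r \<Longrightarrow> arc_root (i, j) \<in> pos_roots_C r"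
  unfolding pos_roots_C_def arc_root_def by auto

lemma pos_roots_C_cases:
  assumes "v \<in> pos_roots_C r"
  obtains (arc) i j where "1 \<le> i" "i < j" "j \<le> r" "v = arc_root (i, j)"
    | (sum) i j where "i \<in> {1..r}" "j \<in> {1..r}" "v = (\<lambda>k. unitv i k + unitv j k)"
proof -
  from assms consider
      (minus) i j where "1 \<le> i" "i < j" "j \<le> r" "v = (\<lambda>k. unitv i k - unitv j k)"
    | (plus) i j where "1 \<le> i" "i < j" "j \<le> r" "v = (\<lambda>k. unitv i k + unitv j k)"
    | (double) i where "1 \<le> i" "i \<le> r" "v = (\<lambda>k. 2 * unitv i k)"
    unfolding pos_roots_C_def by blast
  then show thesis
  proof cases
    case minus
    then show thesis using arc by (simp add: arc_root_def)
  next
    case plus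
    then show thesis using sum[of i j] by auto
  next
    case double
    then have "v = (\<lambda>k. unitv i k + unitv i k)" by (simp add: fun_eq_iff)
    then show thesis using sum double by simp
  qed
qed

lemma sum_flow_partition:
  assumes sink: "{#p \<in># N. snd p = r + 1#} = {#(x, r + 1), (y, r + 1)#}"
  shows "(\<Sum>v\<in>#flow_partition r N. v k) = (\<Sum>p\<in>#N. arc_root p k) + 2 * unitv (r + 1) k"
proof -
  define A where "A = {#p \<in># N. snd p \<noteq> r + 1#}"
  have "N = A + {#(x, r + 1), (y, r + 1)#}"
    using multiset_partition[of N "\<lambda>p. snd p = r + 1"] unfolding sink A_def by (simp only: add.commute)
  then have "(\<Sum>p\<in>#N. arc_root p k) = (\<Sum>p\<in>#A. arc_root p k) + unitv x k + unitv y k - 2 * unitv (r + 1) k"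
    by (simp add: arc_root_def)
  moreover have "(\<Sum>v\<in>#flow_partition r N. v k) = (\<Sum>p\<in>#A. arc_root p k) + unitv x k + unitv y k"
    unfolding flow_partition_def A_def[symmetric]
    by (simp add: sink_root_eq[OF sink] image_mset.compositionality o_def)
  ultimately show ?thesis by simp
qed

lemma flow_partition_in_partitions_C:
  assumes N: "N \<in> flows r" and r: "1 \<le> r"
  shows "flow_partition r N \<in> partitions_C r highest_root_C"
proof -
  have arcs: "set_mset N \<subseteq> arcs r" using N by (simp add: flows_def)
  obtain x y where sink: "{#p \<in># N. snd p = r + 1#} = {#(x, r + 1), (y, r + 1)#}"
    and xy: "x \<in> {1..r}" "y \<in> {1..r}"
    using sink_arcs[OF N r] .
  have "arc_root p \<in> pos_roots_C r" if "p \<in># N" "snd p \<noteq> r + 1" for p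
    using that arcs by (cases p) (auto simp: arcs_def intro!: arc_root_in_pos_roots_C)
  moreover have "set_mset (flow_partition r N) = arc_root ` {p. p \<in># N \<and> snd p \<noteq> r + 1} \<union> {sink_root r N}"
    by (auto simp: flow_partition_def)
  ultimately have "set_mset (flow_partition r N) \<subseteq> pos_roots_C r"
    using xy unitv_add_in_pos_roots_C by (auto simp: sink_root_eq[OF sink])
  then show ?thesis
    using N sum_flow_partition[OF sink] by (simp add: partitions_C_def flows_def highest_root_C_def)
qed

definition coord_sum :: "nat \<Rightarrow> (nat \<Rightarrow> int) \<Rightarrow> int" where
  "coord_sum r v = (\<Sum>k=1..r. v k)"

lemma coord_sum_unitv: "i \<in> {1..r} \<Longrightarrow> coord_sum r (unitv i) = 1"
  by (simp add: coord_sum_def unitv_def)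

lemma coord_sum_arc_root: "1 \<le> i \<Longrightarrow> i < j \<Longrightarrow> j \<le> r \<Longrightarrow> coord_sum r (arc_root (i, j)) = 0"
  using coord_sum_unitv[of i r] coord_sum_unitv[of j r]
  by (simp add: coord_sum_def arc_root_def sum_subtractf)

lemma coord_sum_unitv_add:
  "i \<in> {1..r} \<Longrightarrow> j \<in> {1..r} \<Longrightarrow> coord_sum r (\<lambda>k. unitv i k + unitv j k) = 2"
  using coord_sum_unitv[of i r] coord_sum_unitv[of j r]
  by (simp add: coord_sum_def sum.distrib)

lemma coord_sum_pos_root: "v \<in> pos_roots_C r \<Longrightarrow> coord_sum r v = 0 \<or> coord_sum r v = 2"
  by (elim pos_roots_C_cases) (auto simp: coord_sum_arc_root coord_sum_unitv_add)

lemma sum_coord_sum: "(\<Sum>v\<in>#M. coord_sum r v) = coord_sum r (\<lambda>k. \<Sum>v\<in>#M. v k)"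
  by (induction M) (auto simp: coord_sum_def sum.distrib)

lemma sum_coord_sum_pos_roots:
  assumes "set_mset M \<subseteq> pos_roots_C r"
  shows "(\<Sum>v\<in>#M. coord_sum r v) = 2 * int (size {#v \<in># M. coord_sum r v \<noteq> 0#})"
  using assms
proof (induction M)
  case (add v M)
  then have "coord_sum r v = 0 \<or> coord_sum r v = 2" by (intro coord_sum_pos_root) simp
  then show ?case using add by auto
qed simp

lemma partition_highest_root_C_long_root:
  assumes M: "M \<in> partitions_C r highest_root_C" and r: "1 \<le> r"
  obtains i j where "i \<in> {1..r}" "j \<in> {1..r}"
    and "{#v \<in># M. coord_sum r v \<noteq> 0#} = {#\<lambda>k. unitv i k + unitv j k#}"
proof -
  have roots: "set_mset M \<subseteq> pos_roots_C r" and "(\<lambda>k. \<Sum>v\<in>#M. v k) = (\<lambda>k. 2 * unitv 1 k)"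
    using M by (auto simp: partitions_C_def highest_root_C_def)
  then have "(\<Sum>v\<in>#M. coord_sum r v) = coord_sum r (\<lambda>k. 2 * unitv 1 k)"
    by (simp only: sum_coord_sum)
  also have "\<dots> = 2"
    using coord_sum_unitv[of 1 r] r by (simp add: coord_sum_def flip: sum_distrib_left)
  finally have "size {#v \<in># M. coord_sum r v \<noteq> 0#} = 1"
    using sum_coord_sum_pos_roots[OF roots] by simp
  then obtain u where u: "{#v \<in># M. coord_sum r v \<noteq> 0#} = {#u#}"
    using size_1_singleton_mset by blast
  have "u \<in># {#v \<in># M. coord_sum r v \<noteq> 0#}" unfolding u by simp
  then have long: "coord_sum r u \<noteq> 0" and "u \<in> pos_roots_C r" using roots by auto
  from \<open>u \<in> pos_roots_C r\<close> show thesis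
  proof (cases rule: pos_roots_C_cases)
    case (arc a b)
    then show ?thesis using long coord_sum_arc_root by simp
  next
    case (sum i j)
    then show ?thesis using that u by simp
  qed
qed

lemma flow_partition_split:
  assumes N: "N \<in> flows r" and r: "1 \<le> r"
  shows "{#v \<in># flow_partition r N. coord_sum r v = 0#} = image_mset arc_root {#p \<in># N. snd p \<noteq> r + 1#}"
    and "{#v \<in># flow_partition r N. coord_sum r v \<noteq> 0#} = {#sink_root r N#}"
proof -
  have arcs: "set_mset N \<subseteq> arcs r" using N by (simp add: flows_def)
  obtain x y where sink: "{#p \<in># N. snd p = r + 1#} = {#(x, r + 1), (y, r + 1)#}"
    and xy: "x \<in> {1..r}" "y \<in> {1..r}"
    using sink_arcs[OF N r] .
  have top: "coord_sum r (sink_root r N) \<noteq> 0"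
    using coord_sum_unitv_add[OF xy] by (simp add: sink_root_eq[OF sink])
  have "coord_sum r (arc_root p) = 0" if "p \<in># N" "snd p \<noteq> r + 1" for p
    using that arcs by (cases p) (auto simp: arcs_def intro!: coord_sum_arc_root)
  then have "{#v \<in># image_mset arc_root {#p \<in># N. snd p \<noteq> r + 1#}. coord_sum r v = 0#}
      = image_mset arc_root {#p \<in># N. snd p \<noteq> r + 1#}"
    by (auto simp: filter_mset_eq_conv)
  then show "{#v \<in># flow_partition r N. coord_sum r v = 0#} = image_mset arc_root {#p \<in># N. snd p \<noteq> r + 1#}"
    and "{#v \<in># flow_partition r N. coord_sum r v \<noteq> 0#} = {#sink_root r N#}"
    using top by (auto simp: flow_partition_def filter_mset_eq_conv)
qed

lemma inj_on_arc_root: "inj_on arc_root (arcs r)"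
proof (rule inj_onI)
  fix p q assume p: "p \<in> arcs r" and q: "q \<in> arcs r" and eq: "arc_root p = arc_root q"
  have "arc_root q (fst p) = 1" "arc_root q (snd p) = -1"
    using p unfolding eq[symmetric] by (auto simp: arc_root_def unitv_def arcs_def)
  then have "fst q = fst p" "snd q = snd p"
    by (auto simp: arc_root_def unitv_def split: if_splits)
  then show "p = q" by (simp add: prod_eq_iff)
qed

lemma inj_on_flow_partition:
  assumes r: "1 \<le> r"
  shows "inj_on (flow_partition r) (flows r)"
proof (rule inj_onI)
  fix N N' assume N: "N \<in> flows r" and N': "N' \<in> flows r"
    and eq: "flow_partition r N = flow_partition r N'"
  have arcs: "set_mset N \<subseteq> arcs r" "set_mset N' \<subseteq> arcs r"
    using N N' by (simp_all add: flows_def)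
  have "image_mset arc_root {#p \<in># N. snd p \<noteq> r + 1#} = image_mset arc_root {#p \<in># N'. snd p \<noteq> r + 1#}"
    using flow_partition_split(1)[OF N r] flow_partition_split(1)[OF N' r] eq by simp
  then have inner: "{#p \<in># N. snd p \<noteq> r + 1#} = {#p \<in># N'. snd p \<noteq> r + 1#}"
    using arcs by (intro image_mset_inj_on_eqD[OF inj_on_arc_root]) auto
  have "sink_root r N = sink_root r N'"
    using flow_partition_split(2)[OF N r] flow_partition_split(2)[OF N' r] eq by simp
  then have "image_mset fst {#p \<in># N. snd p = r + 1#} = image_mset fst {#p \<in># N'. snd p = r + 1#}"
    by (simp add: sink_root_def fun_eq_iff multiset_eq_iff)
  then have sink: "{#p \<in># N. snd p = r + 1#} = {#p \<in># N'. snd p = r + 1#}"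
    by (intro image_mset_inj_on_eqD[of fst "{p. snd p = r + 1}"]) (auto simp: inj_on_def prod_eq_iff)
  show "N = N'"
    using multiset_partition[of N "\<lambda>p. snd p = r + 1"] multiset_partition[of N' "\<lambda>p. snd p = r + 1"]
    unfolding inner sink by simp
qed

lemma flow_partition_surj:
  assumes M: "M \<in> partitions_C r highest_root_C" and r: "1 \<le> r"
  shows "\<exists>N\<in>flows r. flow_partition r N = M"
proof -
  obtain i j where ij: "i \<in> {1..r}" "j \<in> {1..r}"
    and long: "{#v \<in># M. coord_sum r v \<noteq> 0#} = {#\<lambda>k. unitv i k + unitv j k#}"
    using partition_highest_root_C_long_root[OF M r] .
  define M0 where "M0 = {#v \<in># M. coord_sum r v = 0#}"
  have "v \<in> arc_root ` {p \<in> arcs r. snd p \<le> r}" if "v \<in># M0" for v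
  proof -
    have "v \<in> pos_roots_C r" "coord_sum r v = 0" using that M by (auto simp: M0_def partitions_C_def)
    then show ?thesis
      by (cases rule: pos_roots_C_cases) (auto simp: coord_sum_unitv_add arcs_def)
  qed
  then obtain N0 where N0: "set_mset N0 \<subseteq> {p \<in> arcs r. snd p \<le> r}" "image_mset arc_root N0 = M0"
    using ex_image_mset_eq[of M0 arc_root] by blast
  define N where "N = N0 + {#(i, r + 1), (j, r + 1)#}"
  have sink: "{#p \<in># N. snd p = r + 1#} = {#(i, r + 1), (j, r + 1)#}"
    using N0(1) by (force simp: N_def)
  have "{#p \<in># N. snd p \<noteq> r + 1#} = N0"
    using N0(1) by (force simp: N_def filter_mset_eq_conv)
  then have partition: "flow_partition r N = M"
    using multiset_partition[of M "\<lambda>v. coord_sum r v = 0"] N0(2)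
    by (simp add: flow_partition_def sink_root_eq[OF sink] long M0_def)
  have "set_mset N \<subseteq> arcs r" using N0(1) ij by (auto simp: N_def arcs_def)
  then have "N \<in> flows r"
    using sum_flow_partition[OF sink] M
    by (simp add: partition flows_def partitions_C_def highest_root_C_def eq_diff_eq)
  then show ?thesis using partition by blast
qed

lemma bij_betw_flow_partition:
  assumes "1 \<le> r"
  shows "bij_betw (flow_partition r) (flows r) (partitions_C r highest_root_C)"
proof (rule bij_betw_imageI)
  show "inj_on (flow_partition r) (flows r)" using inj_on_flow_partition[OF assms] .
  show "flow_partition r ` flows r = partitions_C r highest_root_C"
    using flow_partition_in_partitions_C flow_partition_surj assms by (force simp: image_iff)
qed

theorem mainTheorem12:
  fixes r :: nat
  assumes "r \<ge> 3"
  shows "(\<exists>f. bij_betw f (partitions_C r highest_root_C) (JS state2 state2 r))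
         \<and> kostant_C r highest_root_C = js state2 state2 r"
proof -
  have r: "1 \<le> r" using assms by simp
  have "bij_betw (flow_js r \<circ> inv_into (flows r) (flow_partition r))
      (partitions_C r highest_root_C) (JS state2 state2 r)"
    using bij_betw_inv_into[OF bij_betw_flow_partition[OF r]] bij_betw_flow_js[OF r]
    by (rule bij_betw_trans)
  then show ?thesis
    unfolding kostant_C_def js_def using bij_betw_same_card by blast
qed

end
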